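(* Let $z\ge1$, $X\subset[\Delta]^d$ finite, $x\in X$ and $p\in X$ fixed, and $r=\|x-p\|_2$. Let $Q\subseteq X$ be a set of at most $k$ centers containing $p$ that is a constant-factor approximation to the optimal $(k,z)$-medoids clustering on $X$ among sets containing a center at $p$, and let $\Psi$ be a constant-factor approximation to $\mathrm{Cost}(X,Q)$. Let $S$ be an optimal $(k,z)$-medoids clustering on $X$ among sets containing a center at $p$ and no center in the interior of the ball $B_r(x)$. Let $n_b$ be the number of points of $X$ assigned (by $Q$, i.e., to their closest center in $Q$) to centers of $Q$ lying in $B_{r/2}(x)$. Then there exists a constant $\gamma\ge1$ such that \[\Psi+n_b\cdot r^z\le\gamma\cdot\mathrm{Cost}(X,S).\]
   Context: $\mathrm{Cost}(X,C)=\sum_{y\in X}\min_{c\in C}\|y-c\|_2^z$. A $(k,z)$-medoids clustering is a set of at most $k$ centers chosen from $X$. $B_\rho(x)$ denotes the Euclidean ball of radius $\rho$ centered at $x$. "Constant-factor approximation" means within a multiplicative constant factor; the constant $\gamma$ may depend on these constants and on $z$. *)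

theory Defs
  imports Complex_Main
begin

type_synonym point = "nat \<Rightarrow> real"

text \<open>The grid [Delta]^d = {1,...,Delta}^d; a point is a function nat => real that
  vanishes outside the coordinates 0..d-1.\<close>
definition grid :: "nat \<Rightarrow> nat \<Rightarrow> point set" where
  "grid Delta d = {y. (\<forall>i<d. y i \<in> \<int> \<and> 1 \<le> y i \<and> y i \<le> real Delta) \<and> (\<forall>i\<ge>d. y i = 0)}"

definition edist :: "nat \<Rightarrow> point \<Rightarrow> point \<Rightarrow> real" where
  "edist d y c = sqrt (\<Sum>i<d. (y i - c i)\<^sup>2)"

definition cost :: "nat \<Rightarrow> real \<Rightarrow> point set \<Rightarrow> point set \<Rightarrow> real" where
  "cost d z X C = (\<Sum>y\<in>X. Min ((\<lambda>c. edist d y c powr z) ` C))"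

definition medoids_with :: "nat \<Rightarrow> point set \<Rightarrow> point \<Rightarrow> point set set" where
  "medoids_with k X p = {C. C \<subseteq> X \<and> card C \<le> k \<and> p \<in> C}"

end

theory Submission
  imports Defs "HOL-Analysis.Analysis"
begin

text \<open>Let \<open>r = \<parallel>x - p\<parallel>\<close>. A point \<open>y\<close> served by a \<open>Q\<close>-center \<open>c\<close> within \<open>r/2\<close> of \<open>x\<close> has its
  \<open>S\<close>-center \<open>s\<close> at distance at least \<open>r\<close> from \<open>x\<close>, so the triangle inequality gives
  \<open>r/2 \<le> \<parallel>y - s\<parallel> + \<parallel>y - c\<parallel>\<close> and hence \<open>r\<^sup>z \<le> 4\<^sup>z (cost of y under S + cost of y under Q)\<close>.
  Summing over these points bounds \<open>n\<^sub>b r\<^sup>z\<close> by \<open>4\<^sup>z (Cost(X,S) + Cost(X,Q))\<close>. Since \<open>S\<close> is itself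
  a clustering containing \<open>p\<close>, \<open>Cost(X,Q) \<le> \<alpha> Cost(X,S)\<close>, and \<open>\<Psi> \<le> \<beta> Cost(X,Q)\<close> finishes the bound.\<close>

lemma edist_eq_L2_set: "edist d y c = L2_set (\<lambda>i. y i - c i) {..<d}"
  by (simp add: edist_def L2_set_def)

lemma edist_nonneg: "0 \<le> edist d a b"
  by (simp add: edist_eq_L2_set L2_set_nonneg)

lemma edist_commute: "edist d a b = edist d b a"
  unfolding edist_def by (simp add: power2_commute)

lemma edist_triangle: "edist d a c \<le> edist d a b + edist d b c"
proof -
  have "edist d a c = L2_set (\<lambda>i. (a i - b i) + (b i - c i)) {..<d}"
    by (simp add: edist_eq_L2_set)
  also have "\<dots> \<le> L2_set (\<lambda>i. a i - b i) {..<d} + L2_set (\<lambda>i. b i - c i) {..<d}"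
    by (rule L2_set_triangle_ineq)
  finally show ?thesis
    by (simp add: edist_eq_L2_set)
qed

lemma powr_le_4_powr_mult_sum:
  fixes a b r z :: real
  assumes "0 \<le> a" "0 \<le> b" "0 \<le> r" "r \<le> 2 * (a + b)" "0 \<le> z"
  shows "r powr z \<le> 4 powr z * (a powr z + b powr z)"
proof -
  have "r \<le> 4 * max a b"
    using assms max.cobounded1[of a b] max.cobounded2[of b a] by argo
  then have "r powr z \<le> (4 * max a b) powr z"
    using assms by (intro powr_mono2) auto
  also have "\<dots> = 4 powr z * max a b powr z"
    using assms by (simp add: powr_mult)
  also have "\<dots> \<le> 4 powr z * (a powr z + b powr z)"
    by (intro mult_left_mono) (auto simp: max_def)
  finally show ?thesis .
qed

definition point_cost :: "nat \<Rightarrow> real \<Rightarrow> point set \<Rightarrow> point \<Rightarrow> real" where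
  "point_cost d z C y = Min ((\<lambda>c. edist d y c powr z) ` C)"

lemma cost_eq_sum_point_cost: "cost d z X C = (\<Sum>y\<in>X. point_cost d z C y)"
  by (simp add: cost_def point_cost_def)

lemma point_cost_attained:
  assumes "finite C" "C \<noteq> {}"
  obtains c where "c \<in> C" "point_cost d z C y = edist d y c powr z"
proof -
  have "point_cost d z C y \<in> (\<lambda>c. edist d y c powr z) ` C"
    unfolding point_cost_def using assms by (intro Min_in) auto
  then show ?thesis
    using that by blast
qed

lemma point_cost_nonneg:
  assumes "finite C" "C \<noteq> {}"
  shows "0 \<le> point_cost d z C y"
  by (metis assms point_cost_attained powr_ge_zero)

lemma point_cost_eq_nearest:
  assumes "finite C" "c \<in> C" "\<forall>c'\<in>C. edist d y c \<le> edist d y c'" "0 \<le> z"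
  shows "point_cost d z C y = edist d y c powr z"
  unfolding point_cost_def
  using assms by (intro Min_eqI) (auto intro: powr_mono2 simp: edist_nonneg)

lemma radius_le_twice_dist_sum:
  assumes "r \<le> edist d s x" "edist d c x \<le> r / 2"
  shows "r \<le> 2 * (edist d y s + edist d y c)"
proof -
  have "edist d s x \<le> edist d s y + (edist d y c + edist d c x)"
    by (meson add_left_mono edist_triangle order_trans)
  then show ?thesis
    using assms by (simp add: edist_commute[of d s y])
qed

lemma radius_powr_le_point_costs:
  assumes S: "finite S" "S \<noteq> {}" and far: "\<forall>s\<in>S. r \<le> edist d s x"
    and Q: "finite Q" "c \<in> Q" and nearest: "\<forall>c'\<in>Q. edist d y c \<le> edist d y c'"
    and near: "edist d c x \<le> r / 2" and "0 \<le> z"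
  shows "r powr z \<le> 4 powr z * (point_cost d z S y + point_cost d z Q y)"
proof -
  obtain s where s: "s \<in> S" "point_cost d z S y = edist d y s powr z"
    using point_cost_attained[OF S] by blast
  have "r \<le> 2 * (edist d y s + edist d y c)"
    using far s(1) near by (intro radius_le_twice_dist_sum) auto
  moreover have "0 \<le> r"
    using near edist_nonneg[of d c x] by linarith
  ultimately have "r powr z \<le> 4 powr z * (edist d y s powr z + edist d y c powr z)"
    using \<open>0 \<le> z\<close> by (intro powr_le_4_powr_mult_sum) (auto simp: edist_nonneg)
  then show ?thesis
    using s(2) point_cost_eq_nearest[OF Q nearest \<open>0 \<le> z\<close>] by simp
qed

lemma near_count_le_cost:
  assumes X: "finite X" and S: "finite S" "S \<noteq> {}" and far: "\<forall>s\<in>S. r \<le> edist d s x"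
    and Q: "finite Q" and nearest: "\<forall>y\<in>X. \<sigma> y \<in> Q \<and> (\<forall>c\<in>Q. edist d y (\<sigma> y) \<le> edist d y c)"
    and "0 \<le> z"
  shows "real (card {y\<in>X. edist d (\<sigma> y) x \<le> r / 2}) * r powr z
    \<le> 4 powr z * (cost d z X S + cost d z X Q)"
proof -
  let ?B = "{y\<in>X. edist d (\<sigma> y) x \<le> r / 2}"
  let ?c = "\<lambda>y. 4 powr z * (point_cost d z S y + point_cost d z Q y)"
  have "real (card ?B) * r powr z = (\<Sum>y\<in>?B. r powr z)"
    by simp
  also have "\<dots> \<le> (\<Sum>y\<in>?B. ?c y)"
    using nearest by (intro sum_mono radius_powr_le_point_costs[OF S far Q] \<open>0 \<le> z\<close>) auto
  also have "\<dots> \<le> (\<Sum>y\<in>X. ?c y)"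
  proof (intro sum_mono2 X)
    show "0 \<le> ?c y" if "y \<in> X - ?B" for y
      using that S Q nearest by (intro mult_nonneg_nonneg add_nonneg_nonneg point_cost_nonneg) auto
  qed auto
  also have "\<dots> = 4 powr z * (cost d z X S + cost d z X Q)"
    by (simp add: cost_eq_sum_point_cost sum_distrib_left[symmetric] sum.distrib)
  finally show ?thesis .
qed

lemma psi_plus_near_count_le_cost:
  assumes "0 \<le> z" "0 \<le> beta" "finite X" "finite S" "S \<noteq> {}" "finite Q"
    and "\<forall>s\<in>S. r \<le> edist d s x"
    and "\<forall>y\<in>X. \<sigma> y \<in> Q \<and> (\<forall>c\<in>Q. edist d y (\<sigma> y) \<le> edist d y c)"
    and Q_approx: "cost d z X Q \<le> alpha * cost d z X S"
    and Psi_approx: "Psi \<le> beta * cost d z X Q"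
  shows "Psi + real (card {y\<in>X. edist d (\<sigma> y) x \<le> r / 2}) * r powr z
    \<le> (alpha * beta + 4 powr z * (1 + alpha)) * cost d z X S"
proof -
  have "Psi \<le> beta * (alpha * cost d z X S)"
    using Psi_approx Q_approx \<open>0 \<le> beta\<close> by (meson mult_left_mono order_trans)
  moreover have "4 powr z * (cost d z X S + cost d z X Q) \<le> 4 powr z * ((1 + alpha) * cost d z X S)"
    using Q_approx by (intro mult_left_mono) (auto simp: algebra_simps)
  ultimately have "Psi + real (card {y\<in>X. edist d (\<sigma> y) x \<le> r / 2}) * r powr z
    \<le> beta * (alpha * cost d z X S) + 4 powr z * ((1 + alpha) * cost d z X S)"
    using near_count_le_cost[of X S r d x Q \<sigma> z] assms by linarith
  then show ?thesis
    by (simp add: algebra_simps)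
qed

theorem lemma3p8:
  fixes z alpha beta :: real
  assumes "z \<ge> 1" and "alpha \<ge> 1" and "beta \<ge> 1"
  shows "\<exists>gamma\<ge>1. \<forall>(Delta::nat) (d::nat) (k::nat) (X::point set) (x::point) (p::point)
            (Q::point set) (Psi::real) (S::point set) (\<sigma>::point \<Rightarrow> point).
     finite X \<longrightarrow> X \<subseteq> grid Delta d \<longrightarrow> x \<in> X \<longrightarrow> p \<in> X \<longrightarrow>
     Q \<in> medoids_with k X p \<longrightarrow>
     (\<forall>C\<in>medoids_with k X p. cost d z X Q \<le> alpha * cost d z X C) \<longrightarrow>
     cost d z X Q \<le> Psi \<longrightarrow> Psi \<le> beta * cost d z X Q \<longrightarrow>
     S \<in> medoids_with k X p \<longrightarrow> (\<forall>c\<in>S. \<not> edist d c x < edist d x p) \<longrightarrow>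
     (\<forall>C\<in>medoids_with k X p. (\<forall>c\<in>C. \<not> edist d c x < edist d x p) \<longrightarrow>
         cost d z X S \<le> cost d z X C) \<longrightarrow>
     (\<forall>y\<in>X. \<sigma> y \<in> Q \<and> (\<forall>c\<in>Q. edist d y (\<sigma> y) \<le> edist d y c)) \<longrightarrow>
     Psi + real (card {y\<in>X. edist d (\<sigma> y) x \<le> edist d x p / 2}) * (edist d x p) powr z
       \<le> gamma * cost d z X S"
proof (intro exI[of _ "alpha * beta + 4 powr z * (1 + alpha)"] conjI allI impI)
  have "1 \<le> alpha * beta"
    using assms mult_mono[of 1 alpha 1 beta] by simp
  then show "1 \<le> alpha * beta + 4 powr z * (1 + alpha)"
    using assms by (simp add: add_increasing2)
next
  fix Delta d k X x p Q Psi S \<sigma>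
  assume X: "finite X" and Q: "Q \<in> medoids_with k X p" and S: "S \<in> medoids_with k X p"
    and Q_approx: "\<forall>C\<in>medoids_with k X p. cost d z X Q \<le> alpha * cost d z X C"
    and Psi_approx: "Psi \<le> beta * cost d z X Q"
    and far: "\<forall>c\<in>S. \<not> edist d c x < edist d x p"
    and nearest: "\<forall>y\<in>X. \<sigma> y \<in> Q \<and> (\<forall>c\<in>Q. edist d y (\<sigma> y) \<le> edist d y c)"
  have "finite S" "S \<noteq> {}" "finite Q"
    using X Q S unfolding medoids_with_def by (auto intro: finite_subset)
  then show "Psi + real (card {y\<in>X. edist d (\<sigma> y) x \<le> edist d x p / 2}) * (edist d x p) powr z
       \<le> (alpha * beta + 4 powr z * (1 + alpha)) * cost d z X S"
    using assms X far nearest Q_approx S Psi_approx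
    by (intro psi_plus_near_count_le_cost) (simp_all add: not_less)
qed

end
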